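(* The partial derivatives $(\omega_\pm)_x$ and $(\omega_\pm)_y$ are uniformly bounded on $R\setminus\{p_0\}$. For all $(x,y)\in R_\pm\setminus\{p_0\}$, $(\omega_\pm)_x(x,y)\ge 0$, with equality exactly when $y=0$. In any wedge $V_a$ (with $p_0$ removed), $(\omega_\pm)_x>1/120$. Furthermore, for $y\neq0$, $y\,(\omega_+)_y>0$ and $y\,(\omega_-)_y<0$.
   Context: For $x>0$, $y\in\mathbb{R}$ let $r_1^2=4+x^2+4x^2y^2$, $\Delta=((x+2)^2+8x^2y^2)((x-2)^2+8x^2y^2)$ and $$\omega_\pm(x,y)=\frac{x^2-4\pm\sqrt{\Delta}}{2r_1^2}.$$ Let $p_0=(2,0)$, $R=\{(x,y): x>0,\ 4-4y^2-x^2y^2-8x^2y^4\ge 0\}$, $R_+=R\cap((0,2]\times\mathbb{R})$, $R_-=R\cap([2,\infty)\times\mathbb{R})$. For $0<a\le 1/10$ the wedge of height $a$ is $V_a=\{(x,y): |y|\le a,\ |y|\ge|x-2|/10\}$. *)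

theory Defs
  imports "HOL-Analysis.Analysis"
begin

definition r1sq :: "real \<Rightarrow> real \<Rightarrow> real" where
  "r1sq x y = 4 + x^2 + 4 * x^2 * y^2"

definition Delta :: "real \<Rightarrow> real \<Rightarrow> real" where
  "Delta x y = ((x + 2)^2 + 8 * x^2 * y^2) * ((x - 2)^2 + 8 * x^2 * y^2)"

definition omega_p :: "real \<Rightarrow> real \<Rightarrow> real" where
  "omega_p x y = (x^2 - 4 + sqrt (Delta x y)) / (2 * r1sq x y)"

definition omega_m :: "real \<Rightarrow> real \<Rightarrow> real" where
  "omega_m x y = (x^2 - 4 - sqrt (Delta x y)) / (2 * r1sq x y)"

definition partial_x :: "(real \<Rightarrow> real \<Rightarrow> real) \<Rightarrow> real \<Rightarrow> real \<Rightarrow> real" where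
  "partial_x f x y = deriv (\<lambda>t. f t y) x"

definition partial_y :: "(real \<Rightarrow> real \<Rightarrow> real) \<Rightarrow> real \<Rightarrow> real \<Rightarrow> real" where
  "partial_y f x y = deriv (\<lambda>t. f x t) y"

definition p0 :: "real \<times> real" where "p0 = (2, 0)"

definition regR :: "(real \<times> real) set" where
  "regR = {(x, y). x > 0 \<and> 4 - 4*y^2 - x^2*y^2 - 8*x^2*y^4 \<ge> 0}"

definition regR_plus :: "(real \<times> real) set" where
  "regR_plus = regR \<inter> ({0<..2} \<times> UNIV)"

definition regR_minus :: "(real \<times> real) set" where
  "regR_minus = regR \<inter> ({2..} \<times> UNIV)"

definition wedge :: "real \<Rightarrow> (real \<times> real) set" where
  "wedge a = {(x, y). \<bar>y\<bar> \<le> a \<and> \<bar>y\<bar> \<ge> \<bar>x - 2\<bar> / 10}"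

end

theory Submission
  imports Defs
begin

(* omega_p and omega_m are the two roots w of the quadratic
     r1sq x y * w^2 + (4 - x^2) * w - 4 x^2 y^2 = 0,
   whose discriminant is Delta. Implicit differentiation gives
     d omega/dx = 2 x (1 - omega) P(omega) / (+- sqrt Delta),
     d omega/dy = 8 x^2 y (1 - omega^2) / (+- sqrt Delta),
   where P(w) = (1 + 4 y^2) w + 4 y^2. The signs of the quadratic at -1, 0, 1 give
   -1 < omega_m <= 0 <= omega_p < 1, and Vieta's formulas give
     P(omega_p) P(omega_m) = -16 y^2 / r1sq,   P(omega_p) - P(omega_m) = (1 + 4 y^2) sqrt Delta / r1sq,
   so P(omega_p) and -P(omega_m) both lie between 16 y^2 / ((1 + 4 y^2) sqrt Delta) and
   (1 + 4 y^2) sqrt Delta / r1sq. The sign statements, the uniform bounds and (using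
   Delta <= 1720 x y^2 and omega_p < 1/2 in the wedge) the wedge estimate all follow. *)

definition quad_root :: "real \<Rightarrow> real \<Rightarrow> real \<Rightarrow> real \<Rightarrow> real" where
  "quad_root s a b c = (- b + s * sqrt (b^2 - 4*a*c)) / (2*a)"

lemma quad_root_sum: "a \<noteq> 0 \<Longrightarrow> quad_root 1 a b c + quad_root (-1) a b c = - b / a"
  unfolding quad_root_def by (simp add: field_simps)

lemma quad_root_diff:
  "a \<noteq> 0 \<Longrightarrow> quad_root 1 a b c - quad_root (-1) a b c = sqrt (b^2 - 4*a*c) / a"
  unfolding quad_root_def by (simp add: field_simps)

lemma quad_root_prod:
  assumes "a \<noteq> 0" "0 \<le> b^2 - 4*a*c"
  shows "quad_root 1 a b c * quad_root (-1) a b c = c / a"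
proof -
  have "(- b + sqrt (b^2 - 4*a*c)) * (- b - sqrt (b^2 - 4*a*c)) = 4*a*c"
    using assms(2) by (simp add: algebra_simps power2_eq_square[symmetric])
  then show ?thesis
    using assms(1) unfolding quad_root_def by (simp add: field_simps power2_eq_square)
qed

lemma quadratic_factor:
  assumes "a \<noteq> 0" "0 \<le> b^2 - 4*a*c"
  shows "a*t^2 + b*t + c = a * (t - quad_root 1 a b c) * (t - quad_root (-1) a b c)"
proof -
  have "a * (t - quad_root 1 a b c) * (t - quad_root (-1) a b c)
      = a*t^2 - a*(quad_root 1 a b c + quad_root (-1) a b c)*t + a*(quad_root 1 a b c * quad_root (-1) a b c)"
    by (simp add: algebra_simps power2_eq_square)
  also have "\<dots> = a*t^2 + b*t + c"
    using assms by (simp add: quad_root_sum quad_root_prod)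
  finally show ?thesis ..
qed

lemma quadratic_nonpos_iff_between_roots:
  assumes "a > 0" "0 \<le> b^2 - 4*a*c"
  shows "a*t^2 + b*t + c \<le> 0 \<longleftrightarrow> quad_root (-1) a b c \<le> t \<and> t \<le> quad_root 1 a b c"
proof -
  have "0 \<le> quad_root 1 a b c - quad_root (-1) a b c"
    using assms by (simp add: quad_root_diff)
  moreover have "a*t^2 + b*t + c = a * (t - quad_root 1 a b c) * (t - quad_root (-1) a b c)"
    using assms by (simp add: quadratic_factor)
  ultimately show ?thesis
    using assms(1) by (auto simp: mult_le_0_iff zero_le_mult_iff)
qed

lemma has_real_derivative_quad_root:
  assumes s: "\<bar>s\<bar> = 1"
    and A: "(A has_real_derivative A') (at t)" and B: "(B has_real_derivative B') (at t)"
    and C: "(C has_real_derivative C') (at t)"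
    and A0: "A t \<noteq> 0" and D0: "0 < B t ^ 2 - 4 * A t * C t"
  defines "w \<equiv> quad_root s (A t) (B t) (C t)"
  shows "((\<lambda>t. quad_root s (A t) (B t) (C t)) has_real_derivative
           - (A' * w^2 + B' * w + C') / (s * sqrt (B t ^ 2 - 4 * A t * C t))) (at t)"
proof -
  define R where "R = sqrt (B t ^ 2 - 4 * A t * C t)"
  have R0: "R > 0" and R2: "R^2 = B t ^ 2 - 4 * A t * C t"
    using D0 unfolding R_def by simp_all
  have s2: "s^2 = 1" using s power2_abs[of s] by simp
  have "((\<lambda>t. quad_root s (A t) (B t) (C t)) has_real_derivative
       ((- B' + s * ((2 * B t * B' - 4 * (A' * C t + A t * C')) / (2 * R))) * (2 * A t)
         - (- B t + s * R) * (2 * A')) / (2 * A t)^2) (at t)"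
    unfolding quad_root_def R_def using D0 A0
    by (auto intro!: derivative_eq_intros A B C simp: power2_eq_square field_simps)
  then show ?thesis unfolding R_def[symmetric]
  proof (rule DERIV_cong)
    show "((- B' + s * ((2 * B t * B' - 4 * (A' * C t + A t * C')) / (2 * R))) * (2 * A t)
         - (- B t + s * R) * (2 * A')) / (2 * A t)^2 = - (A' * w^2 + B' * w + C') / (s * R)"
      \<comment> \<open>implicit differentiation of \<open>A w^2 + B w + C = 0\<close>, where \<open>2 A w + B = s R\<close>\<close>
      unfolding w_def quad_root_def R_def[symmetric] using R0 A0 s
      apply (simp add: field_simps)
      using R2 s2 by algebra
  qed
qed

lemma r1sq_pos: "0 < r1sq x y"
  unfolding r1sq_def by (simp add: add_pos_nonneg)

lemma Delta_eq_discriminant: "Delta x y = (4 - x^2)^2 - 4 * r1sq x y * (- 4*x^2*y^2)"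
  unfolding Delta_def r1sq_def by algebra

lemma Delta_nonneg: "0 \<le> Delta x y"
  unfolding Delta_def by simp

lemma Delta_pos:
  assumes "0 < x" "(x, y) \<noteq> p0"
  shows "0 < Delta x y"
proof -
  have "0 < (x + 2)^2 + 8 * x^2 * y^2" using assms(1) by (simp add: add_pos_nonneg)
  moreover have "0 < (x - 2)^2 + 8 * x^2 * y^2"
    using assms by (cases "y = 0") (auto simp: p0_def add_nonneg_pos)
  ultimately show ?thesis unfolding Delta_def by simp
qed

lemma omega_p_eq_quad_root: "omega_p x y = quad_root 1 (r1sq x y) (4 - x^2) (- 4*x^2*y^2)"
  unfolding omega_p_def quad_root_def Delta_eq_discriminant by simp

lemma omega_m_eq_quad_root: "omega_m x y = quad_root (-1) (r1sq x y) (4 - x^2) (- 4*x^2*y^2)"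
  unfolding omega_m_def quad_root_def Delta_eq_discriminant by simp

lemma has_real_derivative_omega_x:
  assumes "\<bar>s\<bar> = 1" "0 < x" "(x, y) \<noteq> p0"
  defines "w \<equiv> quad_root s (r1sq x y) (4 - x^2) (- 4*x^2*y^2)"
  shows "((\<lambda>t. quad_root s (r1sq t y) (4 - t^2) (- 4*t^2*y^2)) has_real_derivative
           2*x * (1 - w) * ((1 + 4*y^2) * w + 4*y^2) / (s * sqrt (Delta x y))) (at x)"
proof -
  have A: "((\<lambda>t. r1sq t y) has_real_derivative 2*x * (1 + 4*y^2)) (at x)"
    unfolding r1sq_def by (auto intro!: derivative_eq_intros simp: algebra_simps)
  have B: "((\<lambda>t. 4 - t^2) has_real_derivative - 2*x) (at x)"
    by (auto intro!: derivative_eq_intros)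
  have C: "((\<lambda>t. - 4*t^2*y^2) has_real_derivative - 8*x*y^2) (at x)"
    by (auto intro!: derivative_eq_intros)
  have "((\<lambda>t. quad_root s (r1sq t y) (4 - t^2) (- 4*t^2*y^2)) has_real_derivative
      - (2*x * (1 + 4*y^2) * w^2 + (- 2*x) * w + (- 8*x*y^2)) / (s * sqrt (Delta x y))) (at x)"
    using has_real_derivative_quad_root[OF assms(1) A B C] r1sq_pos[of x y] Delta_pos[OF assms(2,3)]
    unfolding w_def Delta_eq_discriminant by simp
  then show ?thesis
    by (rule DERIV_cong) (simp add: algebra_simps power2_eq_square)
qed

lemma has_real_derivative_omega_y:
  assumes "\<bar>s\<bar> = 1" "0 < x" "(x, y) \<noteq> p0"
  defines "w \<equiv> quad_root s (r1sq x y) (4 - x^2) (- 4*x^2*y^2)"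
  shows "((\<lambda>t. quad_root s (r1sq x t) (4 - x^2) (- 4*x^2*t^2)) has_real_derivative
           8*x^2*y * (1 - w^2) / (s * sqrt (Delta x y))) (at y)"
proof -
  have A: "((\<lambda>t. r1sq x t) has_real_derivative 8*x^2*y) (at y)"
    unfolding r1sq_def by (auto intro!: derivative_eq_intros)
  have B: "((\<lambda>t. 4 - x^2) has_real_derivative 0) (at y)"
    by (auto intro!: derivative_eq_intros)
  have C: "((\<lambda>t. - 4*x^2*t^2) has_real_derivative - 8*x^2*y) (at y)"
    by (auto intro!: derivative_eq_intros)
  have "((\<lambda>t. quad_root s (r1sq x t) (4 - x^2) (- 4*x^2*t^2)) has_real_derivative
      - (8*x^2*y * w^2 + 0 * w + (- 8*x^2*y)) / (s * sqrt (Delta x y))) (at y)"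
    using has_real_derivative_quad_root[OF assms(1) A B C] r1sq_pos[of x y] Delta_pos[OF assms(2,3)]
    unfolding w_def Delta_eq_discriminant by simp
  then show ?thesis
    by (rule DERIV_cong) (simp add: algebra_simps)
qed

lemma partial_x_omega:
  assumes "0 < x" "(x, y) \<noteq> p0"
  shows "partial_x omega_p x y
           = 2*x * (1 - omega_p x y) * ((1 + 4*y^2) * omega_p x y + 4*y^2) / sqrt (Delta x y)"
    and "partial_x omega_m x y
           = 2*x * (1 - omega_m x y) * (- ((1 + 4*y^2) * omega_m x y + 4*y^2)) / sqrt (Delta x y)"
  unfolding partial_x_def omega_p_eq_quad_root omega_m_eq_quad_root
  using DERIV_imp_deriv[OF has_real_derivative_omega_x[OF _ assms, of 1]]
    DERIV_imp_deriv[OF has_real_derivative_omega_x[OF _ assms, of "-1"]] Delta_pos[OF assms]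
  by (simp_all add: field_simps)

lemma partial_y_omega:
  assumes "0 < x" "(x, y) \<noteq> p0"
  shows "partial_y omega_p x y = 8*x^2*y * (1 - (omega_p x y)^2) / sqrt (Delta x y)"
    and "partial_y omega_m x y = - (8*x^2*y * (1 - (omega_m x y)^2) / sqrt (Delta x y))"
  unfolding partial_y_def omega_p_eq_quad_root omega_m_eq_quad_root
  using DERIV_imp_deriv[OF has_real_derivative_omega_y[OF _ assms, of 1]]
    DERIV_imp_deriv[OF has_real_derivative_omega_y[OF _ assms, of "-1"]]
  by simp_all

lemma omega_nonpos_iff_between:
  "r1sq x y * t^2 + (4 - x^2) * t + (- 4*x^2*y^2) \<le> 0 \<longleftrightarrow> omega_m x y \<le> t \<and> t \<le> omega_p x y"
  unfolding omega_p_eq_quad_root omega_m_eq_quad_root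
  by (rule quadratic_nonpos_iff_between_roots[OF r1sq_pos Delta_nonneg[unfolded Delta_eq_discriminant]])

lemma omega_sum: "omega_p x y + omega_m x y = (x^2 - 4) / r1sq x y"
  unfolding omega_p_eq_quad_root omega_m_eq_quad_root
  using r1sq_pos[of x y] quad_root_sum[of "r1sq x y" "4 - x^2" "- 4*x^2*y^2"] by simp

lemma omega_prod: "omega_p x y * omega_m x y = - 4*x^2*y^2 / r1sq x y"
  unfolding omega_p_eq_quad_root omega_m_eq_quad_root
  using r1sq_pos[of x y] Delta_nonneg[of x y, unfolded Delta_eq_discriminant]
    quad_root_prod[of "r1sq x y" "4 - x^2" "- 4*x^2*y^2"] by simp

lemma omega_diff: "omega_p x y - omega_m x y = sqrt (Delta x y) / r1sq x y"
  unfolding omega_p_eq_quad_root omega_m_eq_quad_root Delta_eq_discriminant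
  using r1sq_pos[of x y] by (intro quad_root_diff) simp

lemma omega_m_le_zero_le_omega_p: "omega_m x y \<le> 0" "0 \<le> omega_p x y"
proof -
  have "0 \<le> sqrt (Delta x y) / r1sq x y"
    using r1sq_pos[of x y] Delta_nonneg[of x y] by simp
  then have "omega_m x y \<le> omega_p x y"
    using omega_diff[of x y] by linarith
  moreover have "omega_p x y * omega_m x y \<le> 0"
    using omega_prod[of x y] r1sq_pos[of x y] by (simp add: divide_nonpos_pos)
  ultimately show "omega_m x y \<le> 0" "0 \<le> omega_p x y"
    by (auto simp: mult_le_0_iff)
qed

lemma omega_p_less_one: "omega_p x y < 1"
  using omega_nonpos_iff_between[of x y 1] omega_m_le_zero_le_omega_p[of x y]
  by (auto simp: r1sq_def)

lemma omega_m_greater_minus_one: "x \<noteq> 0 \<Longrightarrow> -1 < omega_m x y"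
  using omega_nonpos_iff_between[of x y "-1"] omega_m_le_zero_le_omega_p[of x y]
  by (auto simp: r1sq_def)

lemma abs_omega_less_one:
  assumes "x \<noteq> 0"
  shows "\<bar>omega_p x y\<bar> < 1" and "\<bar>omega_m x y\<bar> < 1"
  using omega_m_le_zero_le_omega_p[of x y] omega_p_less_one[of x y]
    omega_m_greater_minus_one[OF assms, of y] by auto

lemma omega_p_less_half:
  assumes "x^2 \<le> 9" "y^2 \<le> 1/100"
  shows "omega_p x y < 1/2"
proof -
  have "x^2 * y^2 \<le> 9 * (1/100)" using assms by (intro mult_mono) simp_all
  moreover have "r1sq x y * (1/2)^2 + (4 - x^2) * (1/2) + (- 4*x^2*y^2) = 3 - x^2/4 - 3 * (x^2*y^2)"
    unfolding r1sq_def by (simp add: power2_eq_square field_simps)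
  ultimately have "0 < r1sq x y * (1/2)^2 + (4 - x^2) * (1/2) + (- 4*x^2*y^2)"
    using assms(1) by linarith
  then show ?thesis
    using omega_nonpos_iff_between[of x y "1/2"] omega_m_le_zero_le_omega_p[of x y] by auto
qed

lemma omega_eq_0_on_axis:
  shows "x^2 \<le> 4 \<Longrightarrow> omega_p x 0 = 0" and "4 \<le> x^2 \<Longrightarrow> omega_m x 0 = 0"
  unfolding omega_p_def omega_m_def Delta_eq_discriminant by simp_all

lemma omega_factor_prod:
  "((1 + 4*y^2) * omega_p x y + 4*y^2) * ((1 + 4*y^2) * omega_m x y + 4*y^2) = - 16*y^2 / r1sq x y"
proof -
  have "((1 + 4*y^2) * omega_p x y + 4*y^2) * ((1 + 4*y^2) * omega_m x y + 4*y^2)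
      = (1 + 4*y^2)^2 * (omega_p x y * omega_m x y)
        + 4*y^2 * (1 + 4*y^2) * (omega_p x y + omega_m x y) + 16*y^4"
    by algebra
  also have "\<dots> = ((1 + 4*y^2)^2 * (- 4*x^2*y^2) + 4*y^2 * (1 + 4*y^2) * (x^2 - 4)
                     + 16*y^4 * r1sq x y) / r1sq x y"
    unfolding omega_prod omega_sum using r1sq_pos[of x y] by (simp add: field_simps)
  also have "\<dots> = - 16*y^2 / r1sq x y"
    unfolding r1sq_def by algebra
  finally show ?thesis .
qed

lemma omega_factor_diff:
  "((1 + 4*y^2) * omega_p x y + 4*y^2) - ((1 + 4*y^2) * omega_m x y + 4*y^2)
     = (1 + 4*y^2) * sqrt (Delta x y) / r1sq x y"
proof -
  have "((1 + 4*y^2) * omega_p x y + 4*y^2) - ((1 + 4*y^2) * omega_m x y + 4*y^2)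
      = (1 + 4*y^2) * (omega_p x y - omega_m x y)"
    by (simp add: algebra_simps)
  then show ?thesis by (simp add: omega_diff)
qed

lemma omega_factor_lower_bounds:
  assumes "0 < x" "(x, y) \<noteq> p0"
  shows "16*y^2 / ((1 + 4*y^2) * sqrt (Delta x y)) \<le> (1 + 4*y^2) * omega_p x y + 4*y^2"
    and "16*y^2 / ((1 + 4*y^2) * sqrt (Delta x y)) \<le> - ((1 + 4*y^2) * omega_m x y + 4*y^2)"
proof -
  define p where "p = (1 + 4*y^2) * omega_p x y + 4*y^2"
  define q where "q = (1 + 4*y^2) * omega_m x y + 4*y^2"
  define d where "d = (1 + 4*y^2) * sqrt (Delta x y)"
  have d0: "0 < d" unfolding d_def using Delta_pos[OF assms] by (simp add: add_pos_nonneg)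
  have r0: "0 < r1sq x y" by (rule r1sq_pos)
  have pq: "p * q = - 16*y^2 / r1sq x y" and diff: "p - q = d / r1sq x y"
    unfolding p_def q_def d_def by (rule omega_factor_prod, rule omega_factor_diff)
  \<comment> \<open>\<open>p * (p - q) = p^2 - p * q \<ge> - p * q\<close>, and likewise \<open>- q * (p - q) \<ge> - p * q\<close>.\<close>
  have "16*y^2 / r1sq x y \<le> p * (d / r1sq x y)" "16*y^2 / r1sq x y \<le> - q * (d / r1sq x y)"
    unfolding diff[symmetric] using pq by (simp_all add: algebra_simps power2_eq_square[symmetric])
  then have "16*y^2 \<le> p * d" "16*y^2 \<le> - q * d"
    using r0 by (simp_all add: divide_le_eq)
  then show "16*y^2 / d \<le> p" "16*y^2 / d \<le> - q"
    using d0 by (simp_all add: divide_le_eq)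
qed

lemma partial_x_omega_lower_bounds:
  assumes "0 < x" "(x, y) \<noteq> p0"
  shows "32*x*y^2 * (1 - omega_p x y) / ((1 + 4*y^2) * Delta x y) \<le> partial_x omega_p x y"
    and "32*x*y^2 * (1 - omega_m x y) / ((1 + 4*y^2) * Delta x y) \<le> partial_x omega_m x y"
proof -
  define S where "S = sqrt (Delta x y)"
  have S0: "0 < S" and S2: "Delta x y = S^2" unfolding S_def using Delta_pos[OF assms] by simp_all
  have coeff_nonneg: "0 \<le> 2*x * (1 - w) / S" if "w < 1" for w
    using that assms(1) S0 by simp
  have "32*x*y^2 * (1 - omega_p x y) / ((1 + 4*y^2) * Delta x y)
      = 2*x * (1 - omega_p x y) / S * (16*y^2 / ((1 + 4*y^2) * S))"
    unfolding S2 by (simp add: power2_eq_square field_simps)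
  also have "\<dots> \<le> 2*x * (1 - omega_p x y) / S * ((1 + 4*y^2) * omega_p x y + 4*y^2)"
    using omega_factor_lower_bounds(1)[OF assms] coeff_nonneg[OF omega_p_less_one]
    unfolding S_def by (rule mult_left_mono)
  also have "\<dots> = partial_x omega_p x y"
    unfolding partial_x_omega[OF assms] S_def by simp
  finally show "32*x*y^2 * (1 - omega_p x y) / ((1 + 4*y^2) * Delta x y) \<le> partial_x omega_p x y" .
  have "32*x*y^2 * (1 - omega_m x y) / ((1 + 4*y^2) * Delta x y)
      = 2*x * (1 - omega_m x y) / S * (16*y^2 / ((1 + 4*y^2) * S))"
    unfolding S2 by (simp add: power2_eq_square field_simps)
  also have "\<dots> \<le> 2*x * (1 - omega_m x y) / S * - ((1 + 4*y^2) * omega_m x y + 4*y^2)"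
    using omega_factor_lower_bounds(2)[OF assms] coeff_nonneg[of "omega_m x y"] omega_m_le_zero_le_omega_p(1)[of x y]
    unfolding S_def by (intro mult_left_mono) simp_all
  also have "\<dots> = partial_x omega_m x y"
    unfolding partial_x_omega[OF assms] S_def by simp
  finally show "32*x*y^2 * (1 - omega_m x y) / ((1 + 4*y^2) * Delta x y) \<le> partial_x omega_m x y" .
qed

lemma abs_partial_x_omega_le:
  assumes "0 < x" "(x, y) \<noteq> p0" "y^2 \<le> 1"
  shows "\<bar>partial_x omega_p x y\<bar> \<le> 5" and "\<bar>partial_x omega_m x y\<bar> \<le> 5"
proof -
  define S where "S = sqrt (Delta x y)"
  define r where "r = r1sq x y"
  have S0: "0 < S" unfolding S_def using Delta_pos[OF assms(1,2)] by simp
  have r0: "0 < r" unfolding r_def by (rule r1sq_pos)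
  have "4*x * (1 + 4*y^2) \<le> 4*x * 5" using assms(1,3) by (intro mult_left_mono) simp_all
  also have "\<dots> \<le> 5 * r"
    using zero_le_power2[of "x - 2"] zero_le_power2[of "x * y"]
    unfolding r_def r1sq_def by (simp add: power2_eq_square algebra_simps)
  finally have r5: "4*x * (1 + 4*y^2) \<le> 5 * r" .
  have bound: "\<bar>2*x * a * p / S\<bar> \<le> 5"
    if "0 \<le> a" "a \<le> 2" "0 \<le> p" "p \<le> (1 + 4*y^2) * S / r" for a p
  proof -
    have "a * p \<le> 2 * ((1 + 4*y^2) * S / r)" using that by (intro mult_mono) simp_all
    then have "2*x * (a * p) / S \<le> 2*x * (2 * ((1 + 4*y^2) * S / r)) / S"
      using assms(1) S0 by (intro divide_right_mono mult_left_mono) simp_all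
    also have "\<dots> = 4*x * (1 + 4*y^2) / r" using S0 r0 by (simp add: field_simps)
    also have "\<dots> \<le> 5" using r5 r0 by (simp add: divide_le_eq)
    finally show ?thesis using that assms(1) S0 by simp
  qed
  define p where "p = (1 + 4*y^2) * omega_p x y + 4*y^2"
  define q where "q = - ((1 + 4*y^2) * omega_m x y + 4*y^2)"
  have "0 \<le> 16*y^2 / ((1 + 4*y^2) * S)" using S0 by simp
  moreover have "16*y^2 / ((1 + 4*y^2) * S) \<le> p" "16*y^2 / ((1 + 4*y^2) * S) \<le> q"
    unfolding p_def q_def S_def by (rule omega_factor_lower_bounds[OF assms(1,2)])+
  moreover have "p + q = (1 + 4*y^2) * S / r"
    unfolding p_def q_def S_def r_def using omega_factor_diff[of y x] by simp
  ultimately have "0 \<le> p" "p \<le> (1 + 4*y^2) * S / r" "0 \<le> q" "q \<le> (1 + 4*y^2) * S / r"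
    by linarith+
  moreover have "0 \<le> 1 - omega_p x y" "1 - omega_p x y \<le> 2" "0 \<le> 1 - omega_m x y" "1 - omega_m x y \<le> 2"
    using abs_omega_less_one[of x y] assms(1) by auto
  ultimately show "\<bar>partial_x omega_p x y\<bar> \<le> 5" "\<bar>partial_x omega_m x y\<bar> \<le> 5"
    unfolding partial_x_omega[OF assms(1,2)] S_def[symmetric] p_def[symmetric] q_def[symmetric]
    by (meson bound)+
qed

lemma abs_partial_y_omega_le:
  assumes "0 < x" "(x, y) \<noteq> p0"
  shows "\<bar>partial_y omega_p x y\<bar> \<le> 3" and "\<bar>partial_y omega_m x y\<bar> \<le> 3"
proof -
  define S where "S = sqrt (Delta x y)"
  have S0: "0 < S" and S2: "S^2 = Delta x y" unfolding S_def using Delta_pos[OF assms] by simp_all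
  have "(x + 2)^2 = x^2 + 4*x + 4" by algebra
  then have "x^2 \<le> (x + 2)^2 + 8*x^2*y^2" using assms(1) zero_le_power2[of "x*y"] by simp
  then have "x^2 * (8*x^2*y^2) \<le> Delta x y"
    unfolding Delta_def by (intro mult_mono) simp_all
  moreover have "0 \<le> x^2 * (8*x^2*y^2)" by simp
  ultimately have "8 * (x^2 * (8*x^2*y^2)) \<le> 9 * Delta x y" by linarith
  have "(8*x^2*\<bar>y\<bar>)^2 = 8 * (x^2 * (8*x^2*y^2))"
    unfolding power_mult_distrib power2_abs by algebra
  also have "\<dots> \<le> 9 * Delta x y" by fact
  also have "\<dots> = (3*S)^2" using S2 by (simp add: power_mult_distrib)
  finally have xy: "8*x^2*\<bar>y\<bar> \<le> 3*S"
    by (rule power2_le_imp_le) (use S0 in simp)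
  have bound: "\<bar>8*x^2*y * (1 - w^2) / S\<bar> \<le> 3" if "\<bar>w\<bar> < 1" for w
  proof -
    have w2: "0 \<le> 1 - w^2" "1 - w^2 \<le> 1"
      using that by (simp_all add: abs_square_le_1)
    have "\<bar>8*x^2*y * (1 - w^2) / S\<bar> = 8*x^2*\<bar>y\<bar> * (1 - w^2) / S"
      using w2 S0 by (simp add: abs_mult)
    also have "\<dots> \<le> 8*x^2*\<bar>y\<bar> / S"
      using w2 S0 by (simp add: divide_right_mono mult_left_le)
    also have "\<dots> \<le> 3" using xy S0 by (simp add: divide_le_eq)
    finally show ?thesis .
  qed
  show "\<bar>partial_y omega_p x y\<bar> \<le> 3" "\<bar>partial_y omega_m x y\<bar> \<le> 3"
    unfolding partial_y_omega[OF assms] S_def[symmetric] abs_minus_cancel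
    using bound abs_omega_less_one[of x y] assms(1) by blast+
qed

lemma wedge_x_bounds:
  fixes x y :: real
  assumes "y^2 \<le> 1/100" "(x - 2)^2 \<le> 100*y^2"
  shows "1 \<le> x" "x \<le> 3" "x^2 \<le> 9"
proof -
  have "(x - 2)^2 \<le> 1^2" using assms by simp
  then have "\<bar>x - 2\<bar> \<le> 1" using abs_le_square_iff[of "x - 2" 1] by simp
  then show x: "1 \<le> x" "x \<le> 3" by auto
  have "x^2 \<le> 3^2" using x by (intro power_mono) auto
  then show "x^2 \<le> 9" by simp
qed

lemma Delta_le_in_wedge:
  assumes "y^2 \<le> 1/100" "(x - 2)^2 \<le> 100*y^2"
  shows "Delta x y \<le> 1720 * x * y^2"
proof -
  note x = wedge_x_bounds[OF assms]
  have "8*x^2 * y^2 \<le> 8*(3*x) * (1/100)"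
    using x assms(1) by (intro mult_mono) (simp_all add: power2_eq_square)
  moreover have "(x + 2)^2 \<le> 9*x"
    using mult_nonneg_nonpos[of "x - 1" "x - 4"] x by (simp add: power2_eq_square algebra_simps)
  ultimately have A: "(x + 2)^2 + 8*x^2*y^2 \<le> 10*x" using x by linarith
  have "8*x^2 * y^2 \<le> 72 * y^2"
    using x by (intro mult_right_mono) simp_all
  then have B: "(x - 2)^2 + 8*x^2*y^2 \<le> 172*y^2" using assms(2) by linarith
  have "Delta x y \<le> (10*x) * (172*y^2)"
    unfolding Delta_def using A B x by (intro mult_mono) simp_all
  then show ?thesis by simp
qed

lemma partial_x_omega_in_wedge:
  assumes "y \<noteq> 0" "y^2 \<le> 1/100" "(x - 2)^2 \<le> 100*y^2"
  shows "1/120 < partial_x omega_p x y" and "1/120 < partial_x omega_m x y"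
proof -
  have x: "0 < x" "x^2 \<le> 9" using wedge_x_bounds[OF assms(2,3)] by simp_all
  have xy: "(x, y) \<noteq> p0" using assms(1) by (simp add: p0_def)
  have D0: "0 < (1 + 4*y^2) * Delta x y" using Delta_pos[OF x(1) xy] by (simp add: add_pos_nonneg)
  have D_le: "(1 + 4*y^2) * Delta x y \<le> (104/100) * (1720 * x * y^2)"
    using Delta_le_in_wedge[OF assms(2,3)] Delta_nonneg[of x y] assms(2) by (intro mult_mono) simp_all
  \<comment> \<open>\<open>1 + 4 y^2 \<le> 104/100\<close> and \<open>104/100 * 1720 < 120 * 32 / 2\<close>\<close>
  have main: "1/120 < 32*x*y^2 * a / ((1 + 4*y^2) * Delta x y)" if "1/2 \<le> a" for a
  proof -
    have "0 < x * y^2" using x(1) assms(1) by simp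
    then have "(1 + 4*y^2) * Delta x y < 120 * (32*x*y^2 * (1/2))"
      using D_le by simp
    also have "\<dots> \<le> 120 * (32*x*y^2 * a)"
      using that x(1) by (intro mult_left_mono) simp_all
    finally show ?thesis using D0 by (simp add: less_divide_eq)
  qed
  show "1/120 < partial_x omega_p x y"
    using main[of "1 - omega_p x y"] omega_p_less_half[OF x(2) assms(2)]
      partial_x_omega_lower_bounds(1)[OF x(1) xy] by simp
  show "1/120 < partial_x omega_m x y"
    using main[of "1 - omega_m x y"] omega_m_le_zero_le_omega_p(1)[of x y]
      partial_x_omega_lower_bounds(2)[OF x(1) xy] by simp
qed

lemma partial_x_omega_p_sign:
  assumes "0 < x" "x \<le> 2" "(x, y) \<noteq> p0"
  shows "0 \<le> partial_x omega_p x y \<and> (partial_x omega_p x y = 0 \<longleftrightarrow> y = 0)"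
proof (cases "y = 0")
  case True
  have "x^2 \<le> 2^2" using assms(1,2) by (intro power_mono) simp_all
  then show ?thesis
    unfolding partial_x_omega(1)[OF assms(1,3)] using True omega_eq_0_on_axis(1)[of x] by simp
next
  case False
  have "0 < 32*x*y^2 * (1 - omega_p x y) / ((1 + 4*y^2) * Delta x y)"
    using assms(1) False omega_p_less_one[of x y] Delta_pos[OF assms(1,3)]
    by (simp add: add_pos_nonneg)
  then show ?thesis
    using partial_x_omega_lower_bounds(1)[OF assms(1,3)] False by simp
qed

lemma partial_x_omega_m_sign:
  assumes "2 \<le> x" "(x, y) \<noteq> p0"
  shows "0 \<le> partial_x omega_m x y \<and> (partial_x omega_m x y = 0 \<longleftrightarrow> y = 0)"
proof -
  have x: "0 < x" using assms(1) by simp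
  show ?thesis
  proof (cases "y = 0")
    case True
    have "2^2 \<le> x^2" using assms(1) by (intro power_mono) simp_all
    then show ?thesis
      unfolding partial_x_omega(2)[OF x assms(2)] using True omega_eq_0_on_axis(2)[of x] by simp
  next
    case False
    have "0 < 32*x*y^2 * (1 - omega_m x y) / ((1 + 4*y^2) * Delta x y)"
      using x False omega_m_le_zero_le_omega_p(1)[of x y] Delta_pos[OF x assms(2)]
      by (simp add: add_pos_nonneg)
    then show ?thesis
      using partial_x_omega_lower_bounds(2)[OF x assms(2)] False by simp
  qed
qed

lemma y_partial_y_omega_signs:
  assumes "0 < x" "y \<noteq> 0"
  shows "0 < y * partial_y omega_p x y" and "y * partial_y omega_m x y < 0"
proof -
  have xy: "(x, y) \<noteq> p0" using assms(2) by (simp add: p0_def)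
  have S0: "0 < sqrt (Delta x y)" using Delta_pos[OF assms(1) xy] by simp
  have pos: "0 < y * (8*x^2*y * (1 - w^2) / sqrt (Delta x y))" if "\<bar>w\<bar> < 1" for w
  proof -
    have "w^2 < 1" using that by (simp add: abs_square_less_1)
    then have "0 < 8*x^2*y^2 * (1 - w^2) / sqrt (Delta x y)" using assms S0 by simp
    then show ?thesis by (simp add: power2_eq_square algebra_simps)
  qed
  show "0 < y * partial_y omega_p x y" "y * partial_y omega_m x y < 0"
    unfolding partial_y_omega[OF assms(1) xy] using pos abs_omega_less_one[of x y] assms(1) by simp_all
qed

lemma regR_bounds:
  assumes "(x, y) \<in> regR"
  shows "0 < x" "y^2 \<le> 1"
proof -
  have "0 < x" "4 - 4*y^2 - x^2*y^2 - 8*x^2*y^4 \<ge> 0" using assms by (simp_all add: regR_def)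
  moreover have "0 \<le> x^2*y^2" "0 \<le> x^2*y^4" by simp_all
  ultimately show "0 < x" "y^2 \<le> 1" by linarith+
qed

lemma wedge_bounds:
  assumes "a \<le> 1/10" "(x, y) \<in> wedge a - {p0}"
  shows "y \<noteq> 0" "y^2 \<le> 1/100" "(x - 2)^2 \<le> 100*y^2"
proof -
  have y: "\<bar>y\<bar> \<le> 1/10" and xy: "\<bar>x - 2\<bar> \<le> 10 * \<bar>y\<bar>" "(x, y) \<noteq> p0"
    using assms by (auto simp: wedge_def)
  show "y \<noteq> 0" using xy by (auto simp: p0_def)
  have "\<bar>y\<bar>^2 \<le> (1/10)^2" using y by (intro power_mono) simp_all
  then show "y^2 \<le> 1/100" by (simp add: power_divide)
  have "\<bar>x - 2\<bar>^2 \<le> (10 * \<bar>y\<bar>)^2" using xy by (intro power_mono) simp_all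
  then show "(x - 2)^2 \<le> 100*y^2" by (simp add: power_mult_distrib)
qed

theorem lemma4p2:
  shows "(\<exists>M. \<forall>(x, y) \<in> regR - {p0}.
            \<bar>partial_x omega_p x y\<bar> \<le> M \<and> \<bar>partial_y omega_p x y\<bar> \<le> M \<and>
            \<bar>partial_x omega_m x y\<bar> \<le> M \<and> \<bar>partial_y omega_m x y\<bar> \<le> M)
    \<and> (\<forall>(x, y) \<in> regR_plus - {p0}.
            partial_x omega_p x y \<ge> 0 \<and> (partial_x omega_p x y = 0 \<longleftrightarrow> y = 0))
    \<and> (\<forall>(x, y) \<in> regR_minus - {p0}.
            partial_x omega_m x y \<ge> 0 \<and> (partial_x omega_m x y = 0 \<longleftrightarrow> y = 0))
    \<and> (\<forall>a. 0 < a \<and> a \<le> 1/10 \<longrightarrow> (\<forall>(x, y) \<in> wedge a - {p0}.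
            partial_x omega_p x y > 1/120 \<and> partial_x omega_m x y > 1/120))
    \<and> (\<forall>x y. x > 0 \<and> y \<noteq> 0 \<longrightarrow>
            y * partial_y omega_p x y > 0 \<and> y * partial_y omega_m x y < 0)"
  apply (intro conjI)
  subgoal
    using abs_partial_x_omega_le[OF regR_bounds(1) _ regR_bounds(2)]
      abs_partial_y_omega_le[OF regR_bounds(1)]
    by (intro exI[of _ 5]) fastforce
  subgoal using partial_x_omega_p_sign by (auto simp: regR_plus_def regR_def)
  subgoal using partial_x_omega_m_sign by (auto simp: regR_minus_def)
  subgoal using partial_x_omega_in_wedge[OF wedge_bounds] by blast
  subgoal using y_partial_y_omega_signs by blast
  done

end
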